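(* Let $R_1,R_2\in\mathbb R^{r\times n}$ and let $\mathcal R=\ker([R_1\ \ -R_2])\subseteq\mathbb R^n\times\mathbb R^n$ (so $(x,x')\in\mathcal R\iff R_1x=R_2x'$) be a total relation. Then $\mathcal R$ is an equivalence relation on $\mathbb R^n$ if and only if $R_1=R_2$.
   Context: A relation $\mathcal R\subseteq\mathbb R^n\times\mathbb R^n$ is total if every $x\in\mathbb R^n$ appears as a first component of some pair in $\mathcal R$ and every $x'\in\mathbb R^n$ appears as a second component of some pair in $\mathcal R$. *)

theory Defs
  imports "HOL-Analysis.Analysis"
begin

text \<open>A relation is total (in the paper's sense) if every point occurs as a first
component and every point occurs as a second component.  (This is NOT the
library notion \<open>total\<close>, which means connexity.)\<close>
definition total_relation :: "('a \<times> 'b) set \<Rightarrow> bool" where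
  "total_relation R \<longleftrightarrow> Domain R = UNIV \<and> Range R = UNIV"

definition ker_rel :: "real^'n^'r \<Rightarrow> real^'n^'r \<Rightarrow> ((real^'n) \<times> (real^'n)) set" where
  "ker_rel R1 R2 = {(x, x'). R1 *v x - R2 *v x' = 0}"

end

theory Submission
  imports Defs
begin

lemma refl_ker_rel_iff: "refl (ker_rel R1 R2) \<longleftrightarrow> R1 = R2"
proof
  assume "refl (ker_rel R1 R2)"
  then have "R1 *v x = R2 *v x" for x
    by (simp add: refl_on_def ker_rel_def)
  then show "R1 = R2"
    by (simp add: matrix_eq)
qed (simp add: refl_on_def ker_rel_def)

lemma equiv_ker_rel_self: "equiv UNIV (ker_rel R R)"
  by (auto simp: equiv_def refl_on_def sym_def trans_def ker_rel_def)

theorem proposition5: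
  fixes R1 R2 :: "real^'n^'r"
  assumes "total_relation (ker_rel R1 R2)"
  shows "equiv UNIV (ker_rel R1 R2) \<longleftrightarrow> R1 = R2"
  using refl_ker_rel_iff[of R1 R2] equiv_ker_rel_self[of R1]
  by (auto simp: equiv_def)

end
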